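(* Let $r\ge 2$ and $n\ge 4$. For any vertex $(x,y)$ of $\mathcal{D}_{n-1}$ we have $$\pi_n\big(rx+(r-1)y\big)=\pi_{n-1}(x+y),$$ where $\pi_n$ and $\pi_{n-1}$ are as defined in the context.
   Context: Fix an integer $r\ge 2$. Define $c_1=0$, $c_2=1$, $c_n=rc_{n-1}-c_{n-2}$ for $n\ge 3$. For nonnegative integers $a,b$, the maximal Dyck path $\mathcal{P}(a,b)$ is the lattice path from $(0,0)$ to $(a,b)$ using unit north and east steps that never passes strictly above the line segment from $(0,0)$ to $(a,b)$ and is closest to that segment. For $n\ge 3$ let $\mathcal{D}_n=\mathcal{P}(c_{n-1}-c_{n-2},c_{n-2})$; it has $c_{n-1}$ steps, and its vertices are $w_0=(0,0),w_1,\dots,w_{c_{n-1}}$ in order, where $w_i$ is the endpoint of the first $i$ steps (so $w_i=(x,i-x)$ for some $x$). For $n\ge 3$ define $\pi_n:\{0,1,\dots,c_{n-1}\}\to\mathbb{Z}$ by $\pi_n(i)=xc_{n-2}-(i-x)(c_{n-1}-c_{n-2})$, where $w_i=(x,i-x)$ is the $i$-th vertex of $\mathcal{D}_n$. *)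

theory Defs
  imports Main
begin

text \<open>The sequence c: c_1 = 0, c_2 = 1, c_n = r c_{n-1} - c_{n-2} for n >= 3.
  The value at index 0 is never used; it is set to -1, consistent with the recurrence.\<close>
fun cseq :: "nat \<Rightarrow> nat \<Rightarrow> int" where
  "cseq r 0 = -1"
| "cseq r (Suc 0) = 0"
| "cseq r (Suc (Suc 0)) = 1"
| "cseq r (Suc (Suc (Suc n))) = int r * cseq r (Suc (Suc n)) - cseq r (Suc n)"

text \<open>A lattice path from (0,0) to (a,b) with unit east/north steps, given by its
  vertex sequence w 0, ..., w (a+b), which never passes strictly above the segment
  from (0,0) to (a,b) (i.e. every vertex (x,y) satisfies y * a <= b * x).\<close>
definition below_path :: "nat \<Rightarrow> nat \<Rightarrow> (nat \<Rightarrow> nat \<times> nat) \<Rightarrow> bool" where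
  "below_path a b w \<longleftrightarrow>
     w 0 = (0, 0) \<and> w (a + b) = (a, b) \<and>
     (\<forall>i < a + b. w (Suc i) = (fst (w i) + 1, snd (w i)) \<or> w (Suc i) = (fst (w i), snd (w i) + 1)) \<and>
     (\<forall>i \<le> a + b. snd (w i) * a \<le> b * fst (w i))"

definition is_max_dyck :: "nat \<Rightarrow> nat \<Rightarrow> (nat \<Rightarrow> nat \<times> nat) \<Rightarrow> bool" where
  "is_max_dyck a b w \<longleftrightarrow> below_path a b w \<and>
     (\<forall>w'. below_path a b w' \<longrightarrow> (\<forall>i \<le> a + b. snd (w' i) \<le> snd (w i)))"

definition maxdyck_vertex :: "nat \<Rightarrow> nat \<Rightarrow> nat \<Rightarrow> nat \<times> nat" where
  "maxdyck_vertex a b i = (THE v. \<exists>w. is_max_dyck a b w \<and> w i = v)"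

definition Dvertex :: "nat \<Rightarrow> nat \<Rightarrow> nat \<Rightarrow> nat \<times> nat" where
  "Dvertex r n i = maxdyck_vertex (nat (cseq r (n - 1) - cseq r (n - 2))) (nat (cseq r (n - 2))) i"

definition piD :: "nat \<Rightarrow> nat \<Rightarrow> nat \<Rightarrow> int" where
  "piD r n i = (let x = int (fst (Dvertex r n i)) in
                x * cseq r (n - 2) - (int i - x) * (cseq r (n - 1) - cseq r (n - 2)))"

end

theory Submission
  imports Defs
begin

text \<open>The maximal Dyck path of \<open>(a, b)\<close> is the floor path whose \<open>i\<close>-th vertex has
  height \<open>\<lfloor>i b / (a + b)\<rfloor>\<close>, so the potential \<open>x b - (i - x) a\<close> of its vertex \<open>(x, i - x)\<close>
  is \<open>i b mod (a + b)\<close>; that is, \<open>\<pi>_n(i) = i c(n-2) mod c(n-1)\<close>.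
  For a vertex \<open>(x, y)\<close> of \<open>D_(n-1)\<close> with \<open>i = x + y\<close> put
  \<open>p = \<pi>_(n-1)(i) = x c(n-3) - y (c(n-2) - c(n-3))\<close>. The recurrence
  \<open>c(n-1) = r c(n-2) - c(n-3)\<close> gives \<open>(r x + (r - 1) y) c(n-2) = i c(n-1) + p\<close>, and since
  \<open>0 \<le> p < c(n-2) < c(n-1)\<close> the residue of the left-hand side modulo \<open>c(n-1)\<close> is \<open>p\<close>.\<close>

lemma below_path_vertex_sum:
  assumes "below_path a b w" "i \<le> a + b"
  shows "fst (w i) + snd (w i) = i"
  using assms(2)
proof (induction i)
  case 0
  then show ?case using assms(1) by (simp add: below_path_def)
next
  case (Suc i)
  then have "w (Suc i) = (fst (w i) + 1, snd (w i)) \<or> w (Suc i) = (fst (w i), snd (w i) + 1)"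
    using assms(1) by (simp add: below_path_def)
  then show ?case using Suc by auto
qed

lemma below_path_height_le:
  assumes "below_path a b w" "i \<le> a + b" "0 < a + b"
  shows "snd (w i) \<le> i * b div (a + b)"
proof -
  have sum: "fst (w i) + snd (w i) = i" using below_path_vertex_sum assms by blast
  have below: "snd (w i) * a \<le> b * fst (w i)" using assms by (simp add: below_path_def)
  have "snd (w i) * (a + b) = snd (w i) * a + snd (w i) * b" by (simp add: algebra_simps)
  also have "\<dots> \<le> b * fst (w i) + b * snd (w i)" using below by simp
  also have "\<dots> = i * b" using sum by (metis add_mult_distrib2 mult.commute)
  finally show ?thesis using assms(3) by (simp add: less_eq_div_iff_mult_less_eq)
qed

definition floor_path :: "nat \<Rightarrow> nat \<Rightarrow> nat \<Rightarrow> nat \<times> nat" where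
  "floor_path a b k = (k - k * b div (a + b), k * b div (a + b))"

lemma floor_height_le: "k * b div (a + b) \<le> (k::nat)"
proof (cases "a + b = 0")
  case False
  have "k * b div (a + b) \<le> k * (a + b) div (a + b)" by (intro div_le_mono) simp
  also have "\<dots> = k" using False by simp
  finally show ?thesis .
qed simp

lemma floor_path_vertex_sum: "fst (floor_path a b i) + snd (floor_path a b i) = i"
  using floor_height_le[of i b a] by (simp add: floor_path_def)

lemma floor_path_potential:
  "int (fst (floor_path a b i)) * int b - (int i - int (fst (floor_path a b i))) * int a
     = int (i * b mod (a + b))"
proof -
  define f where "f = i * b div (a + b)"
  have "f \<le> i" using floor_height_le by (simp add: f_def)
  then have x: "int (fst (floor_path a b i)) = int i - int f" by (simp add: floor_path_def f_def)
  have "int (fst (floor_path a b i)) * int b - (int i - int (fst (floor_path a b i))) * int a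
      = int i * int b - int f * int (a + b)"
    unfolding x by (simp add: algebra_simps)
  also have "\<dots> = int (i * b - f * (a + b))"
    by (simp add: f_def div_times_less_eq_dividend of_nat_diff)
  also have "i * b - f * (a + b) = i * b mod (a + b)"
    by (simp add: f_def minus_div_mult_eq_mod)
  finally show ?thesis .
qed

lemma below_path_floor_path:
  assumes "0 < a + b"
  shows "below_path a b (floor_path a b)"
proof -
  let ?f = "\<lambda>k. k * b div (a + b)"
  have mono: "?f k \<le> ?f (Suc k)" for k by (simp add: div_le_mono)
  have step: "?f (Suc k) \<le> ?f k + 1" for k
  proof -
    have "?f (Suc k) \<le> (k * b + (a + b)) div (a + b)" by (simp add: div_le_mono)
    also have "\<dots> = ?f k + 1" using assms by (subst div_add_self2) auto
    finally show ?thesis .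
  qed
  have steps: "floor_path a b (Suc i) = (fst (floor_path a b i) + 1, snd (floor_path a b i)) \<or>
      floor_path a b (Suc i) = (fst (floor_path a b i), snd (floor_path a b i) + 1)" for i
  proof (cases "?f (Suc i) = ?f i")
    case True
    then show ?thesis using floor_height_le[of i b a] by (simp add: floor_path_def Suc_diff_le)
  next
    case False
    then have "?f (Suc i) = ?f i + 1" using mono[of i] step[of i] by linarith
    then show ?thesis by (simp add: floor_path_def)
  qed
  have below: "snd (floor_path a b i) * a \<le> b * fst (floor_path a b i)" for i
  proof -
    have "int i - int (fst (floor_path a b i)) = int (snd (floor_path a b i))"
      using floor_path_vertex_sum[of a b i] by (metis add_diff_cancel_left' of_nat_add)
    then have "int (snd (floor_path a b i)) * int a \<le> int (fst (floor_path a b i)) * int b"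
      using floor_path_potential[of a b i] by simp
    then show ?thesis by (metis of_nat_le_iff of_nat_mult mult.commute)
  qed
  show ?thesis
    unfolding below_path_def using assms steps below by (simp add: floor_path_def)
qed

lemma is_max_dyck_floor_path:
  assumes "0 < a + b"
  shows "is_max_dyck a b (floor_path a b)"
  unfolding is_max_dyck_def
  using below_path_floor_path[OF assms] below_path_height_le[OF _ _ assms]
  by (simp add: floor_path_def)

lemma is_max_dyck_eq_floor_path:
  assumes "0 < a + b" "is_max_dyck a b w" "i \<le> a + b"
  shows "w i = floor_path a b i"
proof -
  have below: "below_path a b w" using assms(2) by (simp add: is_max_dyck_def)
  have "snd (floor_path a b i) \<le> snd (w i)"
    using assms(2,3) below_path_floor_path[OF assms(1)] by (simp add: is_max_dyck_def)
  moreover have "snd (w i) \<le> snd (floor_path a b i)"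
    using below_path_height_le[OF below assms(3,1)] by (simp add: floor_path_def)
  ultimately show ?thesis
    using below_path_vertex_sum[OF below assms(3)] floor_path_vertex_sum[of a b i]
    by (simp add: prod_eq_iff)
qed

lemma maxdyck_vertex_eq_floor_path:
  assumes "0 < a + b" "i \<le> a + b"
  shows "maxdyck_vertex a b i = floor_path a b i"
  unfolding maxdyck_vertex_def
proof (rule the_equality)
  show "\<exists>w. is_max_dyck a b w \<and> w i = floor_path a b i"
    using is_max_dyck_floor_path[OF assms(1)] by blast
next
  fix v assume "\<exists>w. is_max_dyck a b w \<and> w i = v"
  then show "v = floor_path a b i" using is_max_dyck_eq_floor_path[OF assms(1) _ assms(2)] by blast
qed

lemma cseq_rec: "3 \<le> m \<Longrightarrow> cseq r m = int r * cseq r (m - 1) - cseq r (m - 2)"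
  by (induction r m rule: cseq.induct) auto

lemma cseq_increasing:
  assumes "2 \<le> r" "1 \<le> m"
  shows "0 \<le> cseq r m \<and> cseq r m < cseq r (Suc m)"
  using assms(2)
proof (induction m rule: dec_induct)
  case base
  then show ?case by simp
next
  case (step m)
  have "2 * cseq r (Suc m) \<le> int r * cseq r (Suc m)"
    using assms(1) step.IH by (intro mult_right_mono) auto
  moreover have "cseq r (Suc (Suc m)) = int r * cseq r (Suc m) - cseq r m"
    using cseq_rec[of "Suc (Suc m)" r] step.hyps by simp
  ultimately show ?case using step.IH by linarith
qed

lemma
  assumes "2 \<le> r" "3 \<le> m" "int i \<le> cseq r (m - 1)"
  shows Dvertex_eq_floor_path:
      "Dvertex r m i = floor_path (nat (cseq r (m - 1) - cseq r (m - 2))) (nat (cseq r (m - 2))) i"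
    and piD_eq_mod: "piD r m i = int i * cseq r (m - 2) mod cseq r (m - 1)"
proof -
  have c: "0 \<le> cseq r (m - 2)" "cseq r (m - 2) < cseq r (m - 1)"
    using cseq_increasing[OF assms(1), of "m - 2"] assms(2) by (simp_all add: Suc_diff_Suc numeral_eq_Suc)
  define a where "a = nat (cseq r (m - 1) - cseq r (m - 2))"
  define b where "b = nat (cseq r (m - 2))"
  have a: "int a = cseq r (m - 1) - cseq r (m - 2)" and b: "int b = cseq r (m - 2)"
    using c by (simp_all add: a_def b_def)
  then have ab: "int (a + b) = cseq r (m - 1)" by simp
  then have "0 < a + b" "i \<le> a + b" using c assms(3) by linarith+
  show D: "Dvertex r m i = floor_path a b i"
    unfolding Dvertex_def a_def[symmetric] b_def[symmetric]
    using maxdyck_vertex_eq_floor_path \<open>0 < a + b\<close> \<open>i \<le> a + b\<close> .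
  have "piD r m i = int (i * b mod (a + b))"
    using floor_path_potential[of a b i] by (simp add: piD_def D a b)
  also have "\<dots> = int i * cseq r (m - 2) mod cseq r (m - 1)"
    using ab b by (metis of_nat_mod of_nat_mult)
  finally show "piD r m i = int i * cseq r (m - 2) mod cseq r (m - 1)" .
qed

lemma Dvertex_vertex_sum:
  assumes "2 \<le> r" "3 \<le> m" "int i \<le> cseq r (m - 1)" "Dvertex r m i = (x, y)"
  shows "x + y = i"
  using floor_path_vertex_sum Dvertex_eq_floor_path[OF assms(1-3)] assms(4)
  by (metis fst_conv snd_conv)

lemma piD_Dvertex:
  assumes "Dvertex r m i = (x, y)" "x + y = i"
  shows "piD r m i = int x * cseq r (m - 2) - int y * (cseq r (m - 1) - cseq r (m - 2))"
  using assms by (auto simp: piD_def)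

lemma le_of_mult_eq_mult_add_mod:
  fixes i j b c d :: int
  assumes "j * c = i * d + i * b mod c" "0 < c" "c < d" "0 \<le> i" "i \<le> c"
  shows "j \<le> d"
proof -
  have "i * d + i * b mod c \<le> c * d"
  proof (cases "i = c")
    case False
    then have "(i + 1) * d \<le> c * d" using assms(2,3,5) by (intro mult_right_mono) auto
    moreover have "i * b mod c < d" using pos_mod_bound[OF assms(2)] assms(3) by (rule less_trans)
    ultimately show ?thesis by (simp add: distrib_right)
  qed simp
  then have "j * c \<le> d * c" using assms(1) by (simp add: mult.commute)
  then show ?thesis using assms(2) by simp
qed

lemma mod_eq_of_mult_eq_mult_add_mod:
  fixes i j b c d :: int
  assumes "j * c = i * d + i * b mod c" "0 < c" "c < d"
  shows "j * c mod d = i * b mod c"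
proof -
  have "0 \<le> i * b mod c" using assms(2) by simp
  moreover have "i * b mod c < d" using pos_mod_bound[OF assms(2)] assms(3) by (rule less_trans)
  ultimately show ?thesis unfolding assms(1) by simp
qed

theorem mainTheorem2:
  fixes r n x y :: nat
  assumes "r \<ge> 2" and "n \<ge> 4"
    and "\<exists>i. int i \<le> cseq r (n - 2) \<and> Dvertex r (n - 1) i = (x, y)"
  shows "piD r n (r * x + (r - 1) * y) = piD r (n - 1) (x + y)"
proof -
  obtain i where i: "int i \<le> cseq r (n - 2)" and xy: "Dvertex r (n - 1) i = (x, y)"
    using assms(3) by blast
  have idx: "n - 1 - 1 = n - 2" "n - 1 - 2 = n - 3" "3 \<le> n - 1" using assms(2) by auto
  have c: "0 \<le> cseq r (n - 3)" "cseq r (n - 3) < cseq r (n - 2)" "cseq r (n - 2) < cseq r (n - 1)"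
    using cseq_increasing[OF assms(1), of "n - 3"] cseq_increasing[OF assms(1), of "n - 2"] assms(2)
    by (simp_all add: Suc_diff_Suc numeral_eq_Suc)
  have sum: "x + y = i"
    using Dvertex_vertex_sum[OF assms(1) idx(3), unfolded idx(1,2), OF i xy] .
  define j where "j = r * x + (r - 1) * y"
  define p where "p = piD r (n - 1) i"
  have p_mod: "p = int i * cseq r (n - 3) mod cseq r (n - 2)"
    unfolding p_def using piD_eq_mod[OF assms(1) idx(3), unfolded idx(1,2), OF i] .
  have key: "int j * cseq r (n - 2) = int i * cseq r (n - 1) + p"
  proof -
    have j: "int j = int r * int x + (int r - 1) * int y" using assms(1) by (simp add: j_def of_nat_diff)
    show ?thesis
      unfolding j p_def piD_Dvertex[OF xy sum, unfolded idx(1,2)]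
      unfolding cseq_rec[OF idx(3), of r, unfolded idx(1,2)] sum[symmetric] of_nat_add
      by (simp add: algebra_simps)
  qed
  \<comment> \<open>Outside \<open>[0, c(n-1)]\<close> the vertex \<open>Dvertex r n j\<close> is an unspecified \<open>THE\<close> value.\<close>
  have "int j \<le> cseq r (n - 1)"
    using le_of_mult_eq_mult_add_mod[OF key[unfolded p_mod]] c i by simp
  then have "piD r n j = int j * cseq r (n - 2) mod cseq r (n - 1)"
    using piD_eq_mod[OF assms(1)] assms(2) by (simp add: numeral_eq_Suc)
  also have "\<dots> = p"
    using mod_eq_of_mult_eq_mult_add_mod[OF key[unfolded p_mod]] c p_mod by simp
  finally show ?thesis by (simp add: j_def p_def sum)
qed

end
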